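(* Let $\alpha\in(0,1)$, $c>1$, let $\theta$ be an admissable function with respect to $\alpha$ and $c$, let $\phi$ be the Borel measure on $(0,\infty)$ with $\phi((t,\infty))=t^{-\alpha}\theta(\log t)$ for $t>0$, let $\widetilde\psi(x)=\int_0^\infty(1-e^{-xt})\,d\phi(t)$ and $G^\ast(x)=1/\widetilde\psi(x)$ for $x>0$. Then the primitive $G_I^\ast(x):=\int_0^x G^\ast(y)\,dy$ is a self-similar Bernstein function with respect to $1-\alpha\in(0,1)$ and $d:=c^{\frac{1-\alpha}{\alpha}}>1$, i.e. $G_I^\ast$ is a Bernstein function and $G_I^\ast(d^{\frac{1}{1-\alpha}}x)=d\cdot G_I^\ast(x)$ for all $x>0$.
   Context: A Bernstein function is a non-negative $C^\infty$ function $f$ on $(0,\infty)$ with $(-1)^{n-1}f^{(n)}(x)\ge0$ for all $n\in\mathbb{N}$, $x>0$. A function $\theta:\mathbb{R}\to\mathbb{R}$ is admissable with respect to $\alpha\in(0,1)$ and $c>1$ if $\theta(x)>0$ for all $x$, $t\mapsto t^{-\alpha}\theta(\log t)$ is non-increasing on $(0,\infty)$, and $\theta$ is $\log(c^{1/\alpha})$-periodic. *)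

theory Defs
  imports "HOL-Analysis.Analysis"
begin

definition bernstein :: "(real \<Rightarrow> real) \<Rightarrow> bool" where
  "bernstein f \<longleftrightarrow>
     (\<forall>x>0. f x \<ge> 0) \<and>
     (\<forall>n. \<forall>x>0. ((deriv ^^ n) f) differentiable (at x)) \<and>
     (\<forall>n\<ge>1. \<forall>x>0. (-1) ^ (n - 1) * (deriv ^^ n) f x \<ge> 0)"

definition admissable :: "real \<Rightarrow> real \<Rightarrow> (real \<Rightarrow> real) \<Rightarrow> bool" where
  "admissable \<alpha> c \<theta> \<longleftrightarrow>
     (\<forall>x. \<theta> x > 0) \<and>
     (\<forall>s t. 0 < s \<longrightarrow> s \<le> t \<longrightarrow> t powr (-\<alpha>) * \<theta> (ln t) \<le> s powr (-\<alpha>) * \<theta> (ln s)) \<and>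
     (\<forall>x. \<theta> (x + ln (c powr (1 / \<alpha>))) = \<theta> x)"

end

theory Submission
  imports Defs
begin

(* Differentiating under the integral sign, with dominating functions that are multiples of
   min 1 t (phi-integrable since theta <= c * theta 0 makes phi {t<..} = O(t powr -alpha)),
   psi is positive with a completely monotone derivative. Leibniz's rule applied to
   (1 / psi)' = - psi' * (1 / psi)^2 then shows that G = 1 / psi is completely monotone, so its
   primitive GI is a Bernstein function. Periodicity of theta means that the image of phi under
   t |-> rho * t, where rho = c powr (1 / alpha), is c * phi. Hence psi (rho * x) = c * psi x,
   and substituting y = rho * u in GI gives GI (rho * x) = (rho / c) * GI x, where rho / c = d
   and rho = d powr (1 / (1 - alpha)). *)

section \<open>Higher derivatives and reciprocals\<close>

lemma higher_deriv_eq_derivative_chain: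
  assumes chain: "\<And>n x. x > 0 \<Longrightarrow> (S n has_real_derivative S (Suc n) x) (at x)"
    and "x > 0"
  shows "(deriv ^^ n) (S 0) x = S n x"
  using \<open>x > 0\<close>
proof (induction n arbitrary: x)
  case (Suc n)
  have "eventually (\<lambda>y. (deriv ^^ n) (S 0) y = S n y) (nhds x)"
    using eventually_nhds_in_open[of "{0<..}" x] Suc by (auto elim!: eventually_mono)
  then have "deriv ((deriv ^^ n) (S 0)) x = deriv (S n) x"
    by (rule deriv_cong_ev) simp
  also have "\<dots> = S (Suc n) x"
    using chain[OF Suc.prems] by (rule DERIV_imp_deriv)
  finally show ?case by simp
qed simp

lemma bernstein_if_derivative_chain:
  assumes chain: "\<And>n x. x > 0 \<Longrightarrow> (S n has_real_derivative S (Suc n) x) (at x)"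
    and nonneg: "\<And>x. x > 0 \<Longrightarrow> S 0 x \<ge> 0"
    and sign: "\<And>n x. n \<ge> 1 \<Longrightarrow> x > 0 \<Longrightarrow> (-1) ^ (n - 1) * S n x \<ge> 0"
  shows "bernstein (S 0)"
  unfolding bernstein_def
proof (intro conjI allI impI)
  fix n :: nat and x :: real
  assume "x > 0"
  have "((deriv ^^ n) (S 0) has_real_derivative S (Suc n) x) (at x)"
    using chain[OF \<open>x > 0\<close>] open_greaterThan
    by (rule has_field_derivative_transform_within_open)
      (use \<open>x > 0\<close> higher_deriv_eq_derivative_chain[of S, OF chain] in auto)
  then show "(deriv ^^ n) (S 0) differentiable (at x)"
    using real_differentiable_def by blast
  show "n \<ge> 1 \<Longrightarrow> (-1) ^ (n - 1) * (deriv ^^ n) (S 0) x \<ge> 0"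
    using sign \<open>x > 0\<close> higher_deriv_eq_derivative_chain[of S, OF chain] by simp
qed (use nonneg in auto)

definition leibniz_sum :: "(nat \<Rightarrow> real \<Rightarrow> real) \<Rightarrow> (nat \<Rightarrow> real \<Rightarrow> real) \<Rightarrow> nat \<Rightarrow> real \<Rightarrow> real" where
  "leibniz_sum F H n x = (\<Sum>i\<le>n. real (n choose i) * F i x * H (n - i) x)"

lemma leibniz_sum_Suc:
  "(\<Sum>i\<le>n. real (n choose i) * (F (Suc i) x * H (n - i) x + F i x * H (Suc (n - i)) x))
     = leibniz_sum F H (Suc n) x"
proof -
  define R where "R = (\<Sum>i\<le>n. real (n choose Suc i) * F (Suc i) x * H (n - i) x)"
  have "leibniz_sum F H (Suc n) x = F 0 x * H (Suc n) x
      + (\<Sum>i\<le>n. real (n choose i) * F (Suc i) x * H (n - i) x) + R"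
    unfolding leibniz_sum_def sum.atMost_Suc_shift R_def
    by (simp add: sum.distrib algebra_simps)
  moreover have "(\<Sum>i\<le>n. real (n choose i) * F i x * H (Suc (n - i)) x)
      = (\<Sum>i\<le>Suc n. real (n choose i) * F i x * H (Suc n - i) x)"
    by (simp add: Suc_diff_le)
  then have "(\<Sum>i\<le>n. real (n choose i) * F i x * H (Suc (n - i)) x) = F 0 x * H (Suc n) x + R"
    unfolding sum.atMost_Suc_shift R_def by simp
  ultimately show ?thesis
    by (simp add: sum.distrib algebra_simps)
qed

lemma has_real_derivative_leibniz_sum:
  assumes F: "\<And>k. k \<le> n \<Longrightarrow> (F k has_real_derivative F (Suc k) x) (at x)"
    and H: "\<And>k. k \<le> n \<Longrightarrow> (H k has_real_derivative H (Suc k) x) (at x)"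
  shows "(leibniz_sum F H n has_real_derivative leibniz_sum F H (Suc n) x) (at x)"
proof -
  have "((\<lambda>y. real (n choose i) * F i y * H (n - i) y) has_real_derivative
      real (n choose i) * (F (Suc i) x * H (n - i) x + F i x * H (Suc (n - i)) x)) (at x)"
    if "i \<le> n" for i
    using F[OF that] H[of "n - i"] by (auto intro!: derivative_eq_intros simp: algebra_simps)
  then have "((\<lambda>y. \<Sum>i\<le>n. real (n choose i) * F i y * H (n - i) y) has_real_derivative
     (\<Sum>i\<le>n. real (n choose i) * (F (Suc i) x * H (n - i) x + F i x * H (Suc (n - i)) x))) (at x)"
    by (intro DERIV_sum) auto
  then show ?thesis
    unfolding leibniz_sum_def[abs_def] leibniz_sum_Suc[unfolded leibniz_sum_def] .
qed

lemma leibniz_sum_alternating_sign: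
  assumes "\<And>k. k \<le> n \<Longrightarrow> (-1) ^ k * F k x \<ge> 0"
    and "\<And>k. k \<le> n \<Longrightarrow> (-1) ^ k * H k x \<ge> 0"
  shows "(-1) ^ n * leibniz_sum F H n x \<ge> 0"
proof -
  have "(-1) ^ n * leibniz_sum F H n x
      = (\<Sum>i\<le>n. real (n choose i) * ((-1) ^ i * F i x) * ((-1) ^ (n - i) * H (n - i) x))"
    unfolding leibniz_sum_def sum_distrib_left
    by (intro sum.cong refl) (simp add: algebra_simps flip: power_add)
  also have "\<dots> \<ge> 0"
    using assms by (intro sum_nonneg mult_nonneg_nonneg[OF mult_nonneg_nonneg]) auto
  finally show ?thesis .
qed

(* With p k standing for the (k+1)-st derivative of f, recip_derivs f p n is the n-th derivative
   of 1 / f, obtained by differentiating (1 / f)' = - f' * (1 / f)^2 with Leibniz's rule. *)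
fun recip_derivs :: "(real \<Rightarrow> real) \<Rightarrow> (nat \<Rightarrow> real \<Rightarrow> real) \<Rightarrow> nat \<Rightarrow> real \<Rightarrow> real" where
  "recip_derivs f p 0 x = 1 / f x"
| "recip_derivs f p (Suc n) x = - (\<Sum>k\<le>n. real (n choose k) * p k x *
      (\<Sum>l\<le>n - k. real ((n - k) choose l) * recip_derivs f p l x * recip_derivs f p (n - k - l) x))"

lemma recip_derivs_Suc:
  "recip_derivs f p (Suc n) x
     = - leibniz_sum p (leibniz_sum (recip_derivs f p) (recip_derivs f p)) n x"
  by (simp add: leibniz_sum_def sum_distrib_left mult.assoc)

lemma has_real_derivative_recip_derivs:
  assumes f_pos: "\<And>x. x > 0 \<Longrightarrow> f x > 0"
    and f_deriv: "\<And>x. x > 0 \<Longrightarrow> (f has_real_derivative p 0 x) (at x)"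
    and p_deriv: "\<And>k x. x > 0 \<Longrightarrow> (p k has_real_derivative p (Suc k) x) (at x)"
    and "x > 0"
  shows "(recip_derivs f p n has_real_derivative recip_derivs f p (Suc n) x) (at x)"
  using \<open>x > 0\<close>
proof (induction n arbitrary: x rule: less_induct)
  case (less n)
  show ?case
  proof (cases n)
    case 0
    have "((\<lambda>x. 1 / f x) has_real_derivative - p 0 x / (f x)\<^sup>2) (at x)"
      using f_pos[OF less.prems] f_deriv[OF less.prems]
      by (auto intro!: derivative_eq_intros simp: power2_eq_square)
    then show ?thesis
      using 0 f_pos[OF less.prems] by (simp add: power2_eq_square)
  next
    case (Suc m)
    let ?g = "recip_derivs f p"
    have "(leibniz_sum ?g ?g j has_real_derivative leibniz_sum ?g ?g (Suc j) x) (at x)" if "j \<le> m" for j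
      using that by (intro has_real_derivative_leibniz_sum less.IH) (auto simp: Suc less.prems)
    then have "(leibniz_sum p (leibniz_sum ?g ?g) m has_real_derivative
        leibniz_sum p (leibniz_sum ?g ?g) (Suc m) x) (at x)"
      by (rule has_real_derivative_leibniz_sum[where F = p, OF p_deriv[OF less.prems]])
    then show ?thesis
      unfolding Suc recip_derivs_Suc[abs_def] by (rule DERIV_minus)
  qed
qed

lemma recip_derivs_alternating_sign:
  assumes f_pos: "f x > 0"
    and p_sign: "\<And>k. (-1) ^ k * p k x \<ge> 0"
  shows "(-1) ^ n * recip_derivs f p n x \<ge> 0"
proof (induction n rule: less_induct)
  case (less n)
  show ?case
  proof (cases n)
    case 0
    then show ?thesis using f_pos by simp
  next
    case (Suc m)
    let ?g = "recip_derivs f p"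
    have "(-1) ^ j * leibniz_sum ?g ?g j x \<ge> 0" if "j \<le> m" for j
      using that by (intro leibniz_sum_alternating_sign less.IH) (auto simp: Suc)
    then have "(-1) ^ m * leibniz_sum p (leibniz_sum ?g ?g) m x \<ge> 0"
      by (rule leibniz_sum_alternating_sign[where F = p, OF p_sign])
    then show ?thesis
      unfolding Suc recip_derivs_Suc by simp
  qed
qed

section \<open>Integrals over the real line and the half-line\<close>

lemma has_real_derivative_integral:
  fixes M :: "'a measure" and K K' :: "real \<Rightarrow> 'a \<Rightarrow> real" and W :: "'a \<Rightarrow> real"
  assumes x: "x \<in> {a<..<b}"
    and K_int: "\<And>y. y \<in> {a<..<b} \<Longrightarrow> integrable M (K y)"
    and K'_meas: "K' x \<in> borel_measurable M"
    and W_int: "integrable M W"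
    and K_deriv: "AE t in M. \<forall>y\<in>{a<..<b}. ((\<lambda>y. K y t) has_real_derivative K' y t) (at y)"
    and K'_bound: "AE t in M. \<forall>y\<in>{a<..<b}. \<bar>K' y t\<bar> \<le> W t"
  shows "((\<lambda>y. \<integral>t. K y t \<partial>M) has_real_derivative (\<integral>t. K' x t \<partial>M)) (at x)"
  unfolding has_field_derivative_iff tendsto_at_iff_sequentially comp_def
proof (intro allI impI)
  fix X :: "nat \<Rightarrow> real"
  assume X_ne: "\<forall>n. X n \<in> UNIV - {x}" and X_lim: "X \<longlonglongrightarrow> x"
  obtain N where N: "\<And>n. n \<ge> N \<Longrightarrow> X n \<in> {a<..<b}"
    using topological_tendstoD[OF X_lim open_greaterThanLessThan x]
    by (auto simp: eventually_sequentially)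
  define Y where "Y n = X (n + N)" for n
  have Y_in: "Y n \<in> {a<..<b}" and Y_ne: "Y n \<noteq> x" for n
    using N X_ne by (auto simp: Y_def)
  define s where "s n t = (K (Y n) t - K x t) / (Y n - x)" for n t
  have "(\<lambda>n. \<integral>t. s n t \<partial>M) \<longlonglongrightarrow> (\<integral>t. K' x t \<partial>M)"
  proof (rule integral_dominated_convergence[where w = W])
    show "s n \<in> borel_measurable M" for n
      unfolding s_def using K_int[OF Y_in] K_int[OF x] by measurable
    show "AE t in M. (\<lambda>n. s n t) \<longlonglongrightarrow> K' x t"
      using K_deriv
    proof eventually_elim
      case (elim t)
      then have "((\<lambda>y. (K y t - K x t) / (y - x)) \<longlongrightarrow> K' x t) (at x)"
        using x by (simp add: has_field_derivative_iff)
      then show "(\<lambda>n. s n t) \<longlonglongrightarrow> K' x t"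
        unfolding tendsto_at_iff_sequentially comp_def s_def Y_def
        using X_ne LIMSEQ_ignore_initial_segment[OF X_lim, of N] by auto
    qed
    show "AE t in M. norm (s n t) \<le> W t" for n
      using K_deriv K'_bound
    proof eventually_elim
      case (elim t)
      define l u where "l = min x (Y n)" and "u = max x (Y n)"
      have "l < u" "{l..u} \<subseteq> {a<..<b}"
        using Y_ne[of n] Y_in[of n] x by (auto simp: l_def u_def)
      then obtain z where z: "l < z" "z < u" "K u t - K l t = (u - l) * K' z t"
        using MVT2[of l u "\<lambda>y. K y t" "\<lambda>y. K' y t"] elim(1) by (metis atLeastAtMost_iff subsetD)
      have "s n t = K' z t"
        using z \<open>l < u\<close> Y_ne[of n]
        by (auto simp: s_def l_def u_def min_def max_def field_simps split: if_splits)
      moreover have "z \<in> {a<..<b}"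
        using z \<open>{l..u} \<subseteq> {a<..<b}\<close> by (meson atLeastAtMost_iff less_imp_le subsetD)
      ultimately show ?case
        using elim(2) by simp
    qed
  qed (use K'_meas W_int in auto)
  then have "(\<lambda>n. ((\<integral>t. K (Y n) t \<partial>M) - (\<integral>t. K x t \<partial>M)) / (Y n - x)) \<longlonglongrightarrow> (\<integral>t. K' x t \<partial>M)"
    unfolding s_def using K_int[OF Y_in] K_int[OF x] by simp
  then show "(\<lambda>n. ((\<integral>t. K (X n) t \<partial>M) - (\<integral>t. K x t \<partial>M)) / (X n - x)) \<longlonglongrightarrow> (\<integral>t. K' x t \<partial>M)"
    unfolding Y_def by (rule LIMSEQ_offset)
qed

lemma power_div_fact_le_exp:
  assumes "x \<ge> 0"
  shows "x ^ n / fact n \<le> exp (x::real)"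
proof -
  have "x ^ n / fact n \<le> (\<Sum>k\<le>n. x ^ k / fact k)"
    using assms by (intro member_le_sum) auto
  also have "\<dots> \<le> exp x"
    using assms summable_exp_generic[of x]
    by (auto simp: exp_def divide_inverse ac_simps intro!: sum_le_suminf)
  finally show ?thesis .
qed

lemma power_mult_exp_le_min_one:
  fixes a :: real
  assumes "a > 0" "n \<ge> 1" "t > 0"
  shows "t ^ n * exp (- a * t) \<le> max 1 (fact n / a ^ n) * min 1 t"
proof (cases "t \<le> 1")
  case True
  have "t ^ n * exp (- a * t) \<le> t ^ 1 * 1"
    using True assms by (intro mult_mono power_decreasing) auto
  also have "\<dots> \<le> max 1 (fact n / a ^ n) * t"
    using mult_right_mono[of 1 "max 1 (fact n / a ^ n)" t] assms by simp
  finally show ?thesis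
    using True by simp
next
  case False
  have "(a * t) ^ n / fact n \<le> exp (a * t)"
    using assms by (intro power_div_fact_le_exp) simp
  then have "t ^ n * exp (- a * t) \<le> fact n / a ^ n"
    using assms by (simp add: field_simps power_mult_distrib exp_minus)
  then show ?thesis
    using False by simp
qed

lemma one_minus_exp_le_min_one:
  fixes x t :: real
  assumes "x > 0" "t > 0"
  shows "\<bar>1 - exp (- x * t)\<bar> \<le> max 1 x * min 1 t"
proof -
  have "\<bar>1 - exp (- x * t)\<bar> \<le> min 1 (x * t)"
    using assms exp_ge_add_one_self[of "- x * t"] by simp
  also have "\<dots> \<le> max 1 x * min 1 t"
  proof (cases "t \<le> 1")
    case True
    have "x * t \<le> max 1 x * t"
      using assms by (intro mult_right_mono) auto
    then show ?thesis
      using True by simp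
  qed simp
  finally show ?thesis .
qed

lemma half_power_powr: "((1/2::real) ^ n) powr (-\<alpha>) = (2 powr \<alpha>) ^ n"
proof -
  have "ln ((1/2::real) ^ n) = - (real n * ln 2)"
    by (simp add: ln_realpow ln_div)
  then show ?thesis
    by (simp add: powr_def flip: exp_of_nat_mult)
qed

lemma min_one_le_dyadic_sum:
  assumes "t > 0"
  shows "ennreal (min 1 t) \<le> (\<Sum>k. ennreal ((1/2) ^ k) * indicator {(1/2::real) ^ Suc k<..} t)"
    (is "_ \<le> suminf ?f")
proof -
  obtain n where "(1/2::real) ^ n < t"
    using real_arch_pow_inv[OF \<open>t > 0\<close>, of "1/2"] by auto
  then have ex: "\<exists>n. (1/2::real) ^ Suc n < t"
    using \<open>t > 0\<close> by (intro exI[of _ n]) simp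
  define m where "m = (LEAST n. (1/2::real) ^ Suc n < t)"
  have m: "(1/2::real) ^ Suc m < t"
    unfolding m_def by (rule LeastI_ex) (rule ex)
  have least: "\<not> (1/2::real) ^ Suc j < t" if "j < m" for j
    using that unfolding m_def by (rule not_less_Least)
  have "min 1 t \<le> (1/2) ^ m"
    using least[of "m - 1"] by (cases m) auto
  then have "ennreal (min 1 t) \<le> ?f m"
    using m by (simp add: ennreal_leI)
  also have "\<dots> \<le> suminf ?f"
    using ennreal_suminf_lessD[of ?f "?f m" m] by (meson not_le less_irrefl)
  finally show ?thesis .
qed

lemma integrable_min_one_if_tail_bound:
  fixes M :: "real measure"
  assumes sets: "sets M = sets borel"
    and pos: "AE t in M. t > 0"
    and "\<alpha> < 1" "B \<ge> 0"
    and tail: "\<And>t. t > 0 \<Longrightarrow> emeasure M {t<..} \<le> ennreal (B * t powr (-\<alpha>))"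
  shows "integrable M (\<lambda>t. min 1 t)"
proof (rule integrableI_nonneg)
  define I where "I k = {(1/2::real) ^ Suc k<..}" for k
  define q where "q = 2 powr \<alpha> / 2"
  have "q < 1"
    using powr_less_mono[OF \<open>\<alpha> < 1\<close>, of 2] by (simp add: q_def)
  have I_sets: "I k \<in> sets M" for k
    by (simp add: I_def sets)
  have shell: "ennreal ((1/2) ^ k) * emeasure M (I k) \<le> ennreal (B * 2 powr \<alpha> * q ^ k)" for k
  proof -
    have "emeasure M (I k) \<le> ennreal (B * ((1/2) ^ Suc k) powr (-\<alpha>))"
      unfolding I_def by (rule tail) simp
    then have "ennreal ((1/2) ^ k) * emeasure M (I k) \<le> ennreal ((1/2) ^ k * (B * ((1/2) ^ Suc k) powr (-\<alpha>)))"
      using \<open>B \<ge> 0\<close> by (simp add: mult_left_mono ennreal_mult)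
    also have "(1/2) ^ k * (B * ((1/2) ^ Suc k) powr (-\<alpha>)) = B * 2 powr \<alpha> * q ^ k"
      unfolding half_power_powr by (simp add: q_def power_divide power_one_over)
    finally show ?thesis .
  qed
  have "(\<integral>\<^sup>+t. ennreal (min 1 t) \<partial>M) \<le> (\<integral>\<^sup>+t. (\<Sum>k. ennreal ((1/2) ^ k) * indicator (I k) t) \<partial>M)"
    using pos unfolding I_def by (intro nn_integral_mono_AE) (elim eventually_mono min_one_le_dyadic_sum)
  also have "\<dots> = (\<Sum>k. ennreal ((1/2) ^ k) * emeasure M (I k))"
    using I_sets by (simp add: nn_integral_suminf nn_integral_cmult_indicator)
  also have "\<dots> \<le> (\<Sum>k. ennreal (B * 2 powr \<alpha> * q ^ k))"
    by (intro suminf_le shell) (auto intro: summableI)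
  also have "\<dots> = ennreal (\<Sum>k. B * 2 powr \<alpha> * q ^ k)"
    using \<open>q < 1\<close> \<open>B \<ge> 0\<close> by (intro suminf_ennreal2 summable_mult summable_geometric) (auto simp: q_def)
  finally show "(\<integral>\<^sup>+t. ennreal (min 1 t) \<partial>M) < \<infinity>"
    by (rule le_less_trans) simp
next
  show "(\<lambda>t. min 1 t) \<in> borel_measurable M"
    unfolding measurable_cong_sets[OF sets refl] by measurable
  show "AE t in M. 0 \<le> min 1 t"
    using pos by eventually_elim simp
qed

lemma measure_eqI_tails_pos:
  fixes M N :: "real measure"
  assumes sets: "sets M = sets borel" "sets N = sets borel"
    and null: "emeasure M {..0} = 0" "emeasure N {..0} = 0"
    and finite: "\<And>t. t > 0 \<Longrightarrow> emeasure M {t<..} < \<infinity>"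
    and tails: "\<And>t. t > 0 \<Longrightarrow> emeasure M {t<..} = emeasure N {t<..}"
  shows "M = N"
proof (rule measure_eqI)
  show "sets M = sets N"
    using sets by simp
  fix X
  assume "X \<in> sets M"
  then have X: "X \<in> sets borel"
    using sets by simp
  have restricted_eq: "emeasure M ({a<..} \<inter> X) = emeasure N ({a<..} \<inter> X)" if "a > 0" for a
  proof -
    have restricted: "emeasure (density K (indicator {a<..})) Y = emeasure K ({a<..} \<inter> Y)"
      if "sets K = sets borel" "Y \<in> sets borel" for K :: "real measure" and Y
      by (rule emeasure_restricted) (use that in auto)
    have "{a<..} \<inter> {t<..} = {max a t<..}" for t
      by auto
    then have "density M (indicator {a<..}) = density N (indicator {a<..})"
      using \<open>a > 0\<close> finite tails sets by (intro measure_eqI_lessThan) (simp_all add: restricted)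
    then show ?thesis
      using X sets by (simp add: restricted[symmetric])
  qed
  define A where "A n = {1 / real (Suc n)<..} \<inter> X" for n
  have "incseq A"
  proof (intro monoI)
    fix m n :: nat
    assume "m \<le> n"
    then have "1 / real (Suc n) \<le> 1 / real (Suc m)"
      by (simp add: frac_le)
    then show "A m \<subseteq> A n"
      by (auto simp: A_def)
  qed
  have A_Union: "(\<Union>n. A n) = X \<inter> {0<..}"
  proof -
    have "(\<Union>n. {1 / real (Suc n)<..}) = {0::real<..}"
    proof (intro equalityI subsetI)
      fix t :: real
      assume "t \<in> {0<..}"
      then obtain n where "inverse (real (Suc n)) < t"
        using reals_Archimedean by auto
      then show "t \<in> (\<Union>n. {1 / real (Suc n)<..})"
        by (auto simp: inverse_eq_divide)
    next
      fix t :: real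
      assume "t \<in> (\<Union>n. {1 / real (Suc n)<..})"
      then obtain n where "1 / real (Suc n) < t"
        by blast
      moreover have "0 < 1 / real (Suc n)"
        by simp
      ultimately show "t \<in> {0<..}"
        unfolding greaterThan_iff by linarith
    qed
    then show ?thesis
      unfolding A_def UN_simps(4) by (simp add: Int_commute)
  qed
  have SUP_A: "emeasure K (X \<inter> {0<..}) = (SUP n. emeasure K (A n))"
    if "sets K = sets borel" for K :: "real measure"
  proof -
    have "A n \<in> sets borel" for n
      unfolding A_def using X by (intro sets.Int) simp_all
    then have "range A \<subseteq> sets K"
      using that by auto
    then show ?thesis
      unfolding A_Union[symmetric] using \<open>incseq A\<close> by (rule SUP_emeasure_incseq[symmetric])
  qed
  have null_diff: "emeasure K (X \<inter> {0<..}) = emeasure K X"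
    if "sets K = sets borel" "emeasure K {..0} = 0" for K :: "real measure"
  proof -
    have "X \<inter> {0<..} = X - {..0}"
      by auto
    then show ?thesis
      using that X by (simp add: emeasure_Diff_null_set null_sets_def)
  qed
  have "emeasure M X = (SUP n. emeasure M (A n))"
    using null_diff[OF sets(1) null(1)] SUP_A[OF sets(1)] by simp
  also have "\<dots> = (SUP n. emeasure N (A n))"
    unfolding A_def using restricted_eq by simp
  also have "\<dots> = emeasure N X"
    using null_diff[OF sets(2) null(2)] SUP_A[OF sets(2)] by simp
  finally show "emeasure M X = emeasure N X" .
qed

lemma set_integrable_Ioc_iff:
  fixes f :: "real \<Rightarrow> real"
  assumes cont: "continuous_on {a<..} f" and "a < x" "a < y"
  shows "set_integrable lborel {a<..x} f \<longleftrightarrow> set_integrable lborel {a<..y} f"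
proof -
  have extend: "set_integrable lborel {a<..v} f"
    if int: "set_integrable lborel {a<..u} f" and "a < u" "u \<le> v" for u v
  proof -
    have "set_integrable lborel {u..v} f"
      using \<open>a < u\<close> by (intro borel_integrable_atLeastAtMost' continuous_on_subset[OF cont]) auto
    then have "set_integrable lborel ({a<..u} \<union> {u..v}) f"
      using int by (intro set_integrable_Un) auto
    moreover have "{a<..u} \<union> {u..v} = {a<..v}"
      using that by auto
    ultimately show ?thesis
      by simp
  qed
  have shrink: "set_integrable lborel {a<..u} f"
    if "set_integrable lborel {a<..v} f" "u \<le> v" for u v
    using that(1) by (rule set_integrable_subset) (use that(2) in auto)
  show ?thesis
    using extend shrink assms(2,3) by (meson linear)
qed

lemma has_real_derivative_set_integral_Ioc:
  fixes f :: "real \<Rightarrow> real"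
  assumes cont: "continuous_on {a<..} f" and int: "set_integrable lborel {a<..x} f" and "a < x"
  shows "((\<lambda>y. \<integral>t\<in>{a<..y}. f t \<partial>lborel) has_real_derivative f x) (at x)"
proof -
  define l where "l = (a + x) / 2"
  have l: "a < l" "l < x"
    using \<open>a < x\<close> by (auto simp: l_def)
  have cont_l: "continuous_on {l..y} f" for y
    using l by (intro continuous_on_subset[OF cont]) auto
  have int_l: "set_integrable lborel {a<..<l} f"
    using int by (rule set_integrable_subset) (use l in auto)
  have split: "(\<integral>t\<in>{a<..y}. f t \<partial>lborel) = (\<integral>t\<in>{a<..<l}. f t \<partial>lborel) + integral {l..y} f"
    if "y \<in> {l<..}" for y
  proof -
    have int_ly: "set_integrable lborel {l..y} f"
      by (rule borel_integrable_atLeastAtMost'[OF cont_l])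
    have "{a<..y} = {a<..<l} \<union> {l..y}"
      using that l by auto
    then have "(\<integral>t\<in>{a<..y}. f t \<partial>lborel) = (\<integral>t\<in>{a<..<l}. f t \<partial>lborel) + (\<integral>t\<in>{l..y}. f t \<partial>lborel)"
      by (simp only:) (rule set_integral_Un[OF _ int_l int_ly], auto)
    then show ?thesis
      using set_borel_integral_eq_integral(2)[OF int_ly] by simp
  qed
  have "((\<lambda>y. integral {l..y} f) has_real_derivative f x) (at x within {l..x + 1})"
    using l by (intro integral_has_real_derivative cont_l) auto
  then have "((\<lambda>y. integral {l..y} f) has_real_derivative f x) (at x)"
    using l at_within_Icc_at[of l x "x + 1"] by simp
  then have "((\<lambda>y. (\<integral>t\<in>{a<..<l}. f t \<partial>lborel) + integral {l..y} f) has_real_derivative f x) (at x)"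
    by (auto intro!: derivative_eq_intros)
  then show ?thesis
    by (rule has_field_derivative_transform_within_open[where S = "{l<..}"]) (use l split in auto)
qed

section \<open>The Laplace exponent of an admissible tail\<close>

lemma periodic_of_int_multiple:
  fixes f :: "real \<Rightarrow> 'a"
  assumes periodic: "\<And>x. f (x + p) = f x"
  shows "f (x + of_int k * p) = f x"
proof (induction k rule: int_induct[where k = 0])
  case (step1 i)
  then show ?case
    using periodic[of "x + of_int i * p"] by (simp add: algebra_simps)
next
  case (step2 i)
  then show ?case
    using periodic[of "x + of_int (i - 1) * p"] by (simp add: algebra_simps)
qed simp

locale admissible_measure =
  fixes \<alpha> c :: real and \<theta> :: "real \<Rightarrow> real" and \<phi> :: "real measure"
  assumes alpha_pos: "0 < \<alpha>" and alpha_less_1: "\<alpha> < 1" and c_gt_1: "1 < c"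
    and admissable: "admissable \<alpha> c \<theta>"
    and sets_phi: "sets \<phi> = sets borel"
    and phi_nonpos: "emeasure \<phi> {..0} = 0"
    and phi_tail: "\<forall>t>0. emeasure \<phi> {t<..} = ennreal (t powr (-\<alpha>) * \<theta> (ln t))"
begin

definition \<rho> :: real where
  "\<rho> = c powr (1 / \<alpha>)"

lemma rho_gt_1: "\<rho> > 1"
  unfolding \<rho>_def using c_gt_1 alpha_pos by simp

lemma rho_powr_alpha: "\<rho> powr \<alpha> = c"
  unfolding \<rho>_def using alpha_pos c_gt_1 by (simp add: powr_powr)

lemma theta_pos: "\<theta> x > 0"
  using admissable by (simp add: admissable_def)

lemma theta_periodic: "\<theta> (x + of_int k * ln \<rho>) = \<theta> x"
  using admissable by (intro periodic_of_int_multiple) (simp add: admissable_def \<rho>_def)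

lemma theta_le: "\<theta> x \<le> c * \<theta> 0"
proof -
  define y where "y = x - of_int \<lfloor>x / ln \<rho>\<rfloor> * ln \<rho>"
  have "ln \<rho> > 0"
    using rho_gt_1 by simp
  then have "0 \<le> y" "y < ln \<rho>"
    using floor_divide_lower[of "ln \<rho>" x] floor_divide_upper[of "ln \<rho>" x]
    unfolding y_def by (simp_all add: algebra_simps)
  have "exp y powr (-\<alpha>) * \<theta> (ln (exp y)) \<le> 1 powr (-\<alpha>) * \<theta> (ln 1)"
    using admissable \<open>0 \<le> y\<close> unfolding admissable_def by (meson one_le_exp_iff zero_less_one)
  then have "\<theta> y \<le> exp (\<alpha> * y) * \<theta> 0"
    by (simp add: powr_def exp_minus field_simps)
  also have "\<dots> \<le> exp (\<alpha> * ln \<rho>) * \<theta> 0"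
    using \<open>y < ln \<rho>\<close> alpha_pos theta_pos[of 0] by simp
  also have "exp (\<alpha> * ln \<rho>) = c"
    using rho_powr_alpha rho_gt_1 by (simp add: powr_def mult.commute)
  finally show ?thesis
    using theta_periodic[of y "\<lfloor>x / ln \<rho>\<rfloor>"] by (simp add: y_def)
qed

lemma measurable_phi_iff: "measurable \<phi> N = measurable borel N"
  by (rule measurable_cong_sets[OF sets_phi refl])

lemma AE_phi_pos: "AE t in \<phi>. t > 0"
proof (rule AE_I')
  show "{..0} \<in> null_sets \<phi>"
    using sets_phi phi_nonpos by (simp add: null_sets_def)
qed auto

lemma integrable_phi_min_one: "integrable \<phi> (\<lambda>t. min 1 t)"
proof (rule integrable_min_one_if_tail_bound[OF sets_phi AE_phi_pos alpha_less_1])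
  show "0 \<le> c * \<theta> 0"
    using c_gt_1 theta_pos[of 0] by simp
  fix t :: real
  assume "t > 0"
  then show "emeasure \<phi> {t<..} \<le> ennreal (c * \<theta> 0 * t powr (-\<alpha>))"
    using phi_tail theta_le[of "ln t"] by (simp add: ennreal_leI mult.commute mult_left_mono)
qed

lemma integrable_phi_if_le_min_one:
  assumes "h \<in> borel_measurable borel" and "\<And>t. t > 0 \<Longrightarrow> \<bar>h t\<bar> \<le> C * min 1 t"
  shows "integrable \<phi> h"
proof (rule Bochner_Integration.integrable_bound)
  show "integrable \<phi> (\<lambda>t. C * min 1 t)"
    using integrable_phi_min_one by simp
  show "h \<in> borel_measurable \<phi>"
    unfolding measurable_phi_iff by (rule assms(1))
  show "AE t in \<phi>. norm (h t) \<le> norm (C * min 1 t)"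
    using AE_phi_pos by eventually_elim (use assms(2) in fastforce)
qed

definition \<psi> :: "real \<Rightarrow> real" where
  "\<psi> x = (\<integral>t. (1 - exp (- x * t)) \<partial>\<phi>)"

definition psi_deriv :: "nat \<Rightarrow> real \<Rightarrow> real" where
  "psi_deriv k x = (-1) ^ k * (\<integral>t. t ^ Suc k * exp (- x * t) \<partial>\<phi>)"

lemma integrable_power_mult_exp:
  assumes "x > 0" "n \<ge> 1"
  shows "integrable \<phi> (\<lambda>t. t ^ n * exp (- x * t))"
  using power_mult_exp_le_min_one[OF assms] by (intro integrable_phi_if_le_min_one) auto

lemma integrable_one_minus_exp:
  assumes "x > 0"
  shows "integrable \<phi> (\<lambda>t. 1 - exp (- x * t))"
  using one_minus_exp_le_min_one[OF assms] by (intro integrable_phi_if_le_min_one) auto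

lemma has_real_derivative_phi_integral:
  assumes "x > 0" "n \<ge> 1"
    and K_int: "\<And>y. y > 0 \<Longrightarrow> integrable \<phi> (K y)"
    and K_deriv: "\<And>y t. ((\<lambda>y. K y t) has_real_derivative K' y t) (at y)"
    and K'_meas: "K' x \<in> borel_measurable borel"
    and K'_bound: "\<And>y t. y > 0 \<Longrightarrow> t > 0 \<Longrightarrow> \<bar>K' y t\<bar> \<le> t ^ n * exp (- y * t)"
  shows "((\<lambda>y. \<integral>t. K y t \<partial>\<phi>) has_real_derivative (\<integral>t. K' x t \<partial>\<phi>)) (at x)"
proof (rule has_real_derivative_integral[where a = "x / 2" and b = "2 * x"
      and W = "\<lambda>t. t ^ n * exp (- (x / 2) * t)"])
  show "K' x \<in> borel_measurable \<phi>"
    unfolding measurable_phi_iff by (rule K'_meas)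
  show "integrable \<phi> (\<lambda>t. t ^ n * exp (- (x / 2) * t))"
    using assms(1,2) by (intro integrable_power_mult_exp) auto
  show "AE t in \<phi>. \<forall>y\<in>{x / 2<..<2 * x}. \<bar>K' y t\<bar> \<le> t ^ n * exp (- (x / 2) * t)"
    using AE_phi_pos
  proof eventually_elim
    case (elim t)
    show ?case
    proof
      fix y
      assume y: "y \<in> {x / 2<..<2 * x}"
      then have "\<bar>K' y t\<bar> \<le> t ^ n * exp (- y * t)"
        using elim \<open>x > 0\<close> by (intro K'_bound) auto
      also have "\<dots> \<le> t ^ n * exp (- (x / 2) * t)"
        using elim y by (intro mult_left_mono) auto
      finally show "\<bar>K' y t\<bar> \<le> t ^ n * exp (- (x / 2) * t)" .
    qed
  qed
qed (use assms in auto)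

lemma psi_has_real_derivative:
  assumes "x > 0"
  shows "(\<psi> has_real_derivative psi_deriv 0 x) (at x)"
proof -
  have "((\<lambda>y. \<integral>t. (1 - exp (- y * t)) \<partial>\<phi>) has_real_derivative (\<integral>t. t * exp (- x * t) \<partial>\<phi>)) (at x)"
    using assms integrable_one_minus_exp
    by (intro has_real_derivative_phi_integral[where n = 1]) (auto intro!: derivative_eq_intros)
  then show ?thesis
    unfolding \<psi>_def[abs_def] psi_deriv_def by simp
qed

lemma psi_deriv_has_real_derivative:
  assumes "x > 0"
  shows "(psi_deriv k has_real_derivative psi_deriv (Suc k) x) (at x)"
proof -
  have "((\<lambda>y. \<integral>t. t ^ Suc k * exp (- y * t) \<partial>\<phi>) has_real_derivative
      (\<integral>t. - (t ^ Suc (Suc k) * exp (- x * t)) \<partial>\<phi>)) (at x)"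
  proof (rule has_real_derivative_phi_integral[where n = "Suc (Suc k)"])
    show "integrable \<phi> (\<lambda>t. t ^ Suc k * exp (- y * t))" if "y > 0" for y
      using that by (rule integrable_power_mult_exp) simp
  qed (use assms in \<open>auto intro!: derivative_eq_intros simp: abs_mult\<close>)
  then show ?thesis
    unfolding psi_deriv_def[abs_def] by (auto intro!: derivative_eq_intros)
qed

lemma psi_deriv_sign: "(-1) ^ k * psi_deriv k x \<ge> 0"
proof -
  have "(\<integral>t. t ^ Suc k * exp (- x * t) \<partial>\<phi>) \<ge> 0"
    using AE_phi_pos by (intro integral_nonneg_AE) (auto elim!: eventually_mono)
  then show ?thesis
    by (simp add: psi_deriv_def flip: mult.assoc power_add)
qed

lemma psi_pos:
  assumes "x > 0"
  shows "\<psi> x > 0"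
proof -
  have fin: "emeasure \<phi> {1<..} = ennreal (\<theta> 0)"
    using phi_tail by simp
  then have "(\<integral>t. indicator {1<..} t * (1 - exp (- x)) \<partial>\<phi>) = \<theta> 0 * (1 - exp (- x))"
    using sets_phi theta_pos[of 0] by (simp add: measure_def)
  also have "\<dots> > 0"
    using theta_pos[of 0] assms by simp
  also have "(\<integral>t. indicator {1<..} t * (1 - exp (- x)) \<partial>\<phi>) \<le> \<psi> x"
    unfolding \<psi>_def
  proof (rule integral_mono_AE)
    show "integrable \<phi> (\<lambda>t. indicator {1<..} t * (1 - exp (- x)))"
      using sets_phi fin by (intro integrable_mult_left integrable_real_indicator) auto
    show "AE t in \<phi>. indicator {1<..} t * (1 - exp (- x)) \<le> 1 - exp (- x * t)"
      using AE_phi_pos by eventually_elim (use assms in \<open>auto simp: indicator_def\<close>)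
  qed (rule integrable_one_minus_exp[OF assms])
  finally show ?thesis .
qed

lemma phi_tail_scale:
  assumes "t > 0"
  shows "emeasure \<phi> {t / \<rho><..} = c * emeasure \<phi> {t<..}"
proof -
  have "(t / \<rho>) powr (-\<alpha>) = t powr (-\<alpha>) / \<rho> powr (-\<alpha>)"
    by (rule powr_divide)
  also have "\<dots> = c * t powr (-\<alpha>)"
    using rho_powr_alpha by (simp add: powr_minus_divide)
  finally have "(t / \<rho>) powr (-\<alpha>) = c * t powr (-\<alpha>)" .
  moreover have "\<theta> (ln (t / \<rho>)) = \<theta> (ln t)"
    using theta_periodic[of "ln (t / \<rho>)" 1] assms rho_gt_1 by (simp add: ln_div)
  ultimately show ?thesis
    using assms rho_gt_1 phi_tail c_gt_1 theta_pos by (simp add: ennreal_mult' mult.assoc)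
qed

lemma distr_phi_scale: "distr \<phi> borel (\<lambda>t. \<rho> * t) = density \<phi> (\<lambda>_. ennreal c)"
proof (rule measure_eqI_tails_pos)
  have meas: "(\<lambda>t. \<rho> * t) \<in> measurable \<phi> borel"
    by (simp add: measurable_phi_iff)
  have space: "space \<phi> = UNIV"
    using sets_eq_imp_space_eq[OF sets_phi] by simp
  have distr_emeasure: "emeasure (distr \<phi> borel (\<lambda>t. \<rho> * t)) X = emeasure \<phi> ((\<lambda>t. \<rho> * t) -` X)"
    if "X \<in> sets borel" for X
    using that by (simp add: emeasure_distr[OF meas] space)
  have density_emeasure: "emeasure (density \<phi> (\<lambda>_. ennreal c)) X = c * emeasure \<phi> X"
    if "X \<in> sets borel" for X
    using that sets_phi by (simp add: emeasure_density_const)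
  have "(\<lambda>t. \<rho> * t) -` {..0} = {..0::real}" "(\<lambda>t. \<rho> * t) -` {t<..} = {t / \<rho><..}" for t
    using rho_gt_1 by (auto simp: mult_le_0_iff field_simps)
  then show "emeasure (distr \<phi> borel (\<lambda>t. \<rho> * t)) {..0} = 0"
    and "emeasure (density \<phi> (\<lambda>_. ennreal c)) {..0} = 0"
    and "\<And>t. t > 0 \<Longrightarrow> emeasure (distr \<phi> borel (\<lambda>t. \<rho> * t)) {t<..} < \<infinity>"
    and "\<And>t. t > 0 \<Longrightarrow> emeasure (distr \<phi> borel (\<lambda>t. \<rho> * t)) {t<..}
        = emeasure (density \<phi> (\<lambda>_. ennreal c)) {t<..}"
    using phi_nonpos phi_tail_scale
    by (simp_all add: distr_emeasure density_emeasure phi_tail ennreal_mult_less_top)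
qed (use sets_phi in simp_all)

lemma psi_scale: "\<psi> (\<rho> * x) = c * \<psi> x"
proof -
  have "\<psi> (\<rho> * x) = (\<integral>s. (1 - exp (- x * s)) \<partial>distr \<phi> borel (\<lambda>t. \<rho> * t))"
    unfolding \<psi>_def
    by (subst integral_distr) (simp_all add: measurable_phi_iff mult.assoc mult.left_commute)
  also have "\<dots> = (\<integral>s. c * (1 - exp (- x * s)) \<partial>\<phi>)"
    unfolding distr_phi_scale
    by (subst integral_density) (use c_gt_1 in \<open>simp_all add: measurable_phi_iff\<close>)
  also have "\<dots> = c * \<psi> x"
    by (simp add: \<psi>_def)
  finally show ?thesis .
qed

definition G :: "real \<Rightarrow> real" where
  "G x = 1 / \<psi> x"

definition GI :: "real \<Rightarrow> real" where
  "GI x = (\<integral>y\<in>{0<..x}. G y \<partial>lborel)"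

lemma G_eq_recip_derivs: "G = recip_derivs \<psi> psi_deriv 0"
  by (simp add: G_def fun_eq_iff)

lemma recip_derivs_psi_has_real_derivative:
  "x > 0 \<Longrightarrow> (recip_derivs \<psi> psi_deriv n has_real_derivative recip_derivs \<psi> psi_deriv (Suc n) x) (at x)"
  using psi_pos psi_has_real_derivative psi_deriv_has_real_derivative
  by (rule has_real_derivative_recip_derivs)

lemma continuous_on_G: "continuous_on {0<..} G"
proof (intro continuous_at_imp_continuous_on ballI)
  fix x :: real
  assume "x \<in> {0<..}"
  then show "isCont G x"
    using DERIV_isCont[OF recip_derivs_psi_has_real_derivative[of x 0]] by (simp add: G_eq_recip_derivs)
qed

lemma GI_nonneg: "GI x \<ge> 0"
  unfolding GI_def set_lebesgue_integral_def
  using psi_pos by (intro integral_nonneg_AE) (auto simp: indicator_def G_def less_imp_le)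

lemma GI_scale: "GI (\<rho> * x) = (\<rho> / c) * GI x"
proof -
  have "\<rho> > 0"
    using rho_gt_1 by simp
  have substituted: "indicator {0<..\<rho> * x} (\<rho> * u) * G (\<rho> * u) = (1 / c) * (indicator {0<..x} u * G u)"
    for u :: real
    using \<open>\<rho> > 0\<close> by (simp add: G_def psi_scale indicator_def zero_less_mult_iff)
  have "GI (\<rho> * x) = (\<integral>y. indicator {0<..\<rho> * x} y * G y \<partial>lborel)"
    by (simp add: GI_def set_lebesgue_integral_def)
  also have "\<dots> = \<rho> * (\<integral>u. indicator {0<..\<rho> * x} (\<rho> * u) * G (\<rho> * u) \<partial>lborel)"
    using lborel_integral_real_affine[of \<rho> "\<lambda>y. indicator {0<..\<rho> * x} y * G y" 0] \<open>\<rho> > 0\<close>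
    by simp
  also have "\<dots> = (\<rho> / c) * GI x"
    unfolding substituted by (simp add: GI_def set_lebesgue_integral_def)
  finally show ?thesis .
qed

lemma bernstein_GI: "bernstein GI"
proof (cases "set_integrable lborel {0<..1} G")
  case True
  define S where "S n = (if n = 0 then GI else recip_derivs \<psi> psi_deriv (n - 1))" for n
  have "bernstein (S 0)"
  proof (rule bernstein_if_derivative_chain)
    fix n :: nat and x :: real
    assume "x > 0"
    show "(S n has_real_derivative S (Suc n) x) (at x)"
    proof (cases n)
      case 0
      have "set_integrable lborel {0<..x} G"
        using True set_integrable_Ioc_iff[OF continuous_on_G, of 1 x] \<open>x > 0\<close> by simp
      then have "(GI has_real_derivative G x) (at x)"
        unfolding GI_def[abs_def] using continuous_on_G \<open>x > 0\<close>
        by (intro has_real_derivative_set_integral_Ioc)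
      then show ?thesis
        by (simp add: S_def 0 G_eq_recip_derivs)
    next
      case (Suc m)
      then show ?thesis
        using recip_derivs_psi_has_real_derivative[OF \<open>x > 0\<close>, of m] by (simp add: S_def)
    qed
  next
    fix n :: nat and x :: real
    assume "n \<ge> 1" "x > 0"
    then show "(-1) ^ (n - 1) * S n x \<ge> 0"
      using recip_derivs_alternating_sign[where f = \<psi> and p = psi_deriv, OF psi_pos psi_deriv_sign]
      by (simp add: S_def)
  qed (simp add: S_def GI_nonneg)
  then show ?thesis
    by (simp add: S_def)
next
  case False
  (* Impossible, as G x = O(x powr -alpha) at 0; but then the Bochner integral GI is 0. *)
  have "GI = (\<lambda>_. 0)"
  proof
    fix x
    show "GI x = 0"
    proof (cases "x > 0")
      case True
      then have "\<not> set_integrable lborel {0<..x} G"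
        using False set_integrable_Ioc_iff[OF continuous_on_G, of 1 x] by simp
      then show ?thesis
        unfolding GI_def set_lebesgue_integral_def set_integrable_def
        by (rule not_integrable_integral_eq)
    qed (simp add: GI_def set_lebesgue_integral_def)
  qed
  moreover have "bernstein (\<lambda>_. 0)"
    using bernstein_if_derivative_chain[of "\<lambda>_ _. 0"] by simp
  ultimately show ?thesis
    by simp
qed

end

theorem lemma2p8:
  fixes \<alpha> c d :: real and \<theta> \<psi> G GI :: "real \<Rightarrow> real" and \<phi> :: "real measure"
  assumes "0 < \<alpha>" "\<alpha> < 1" "c > 1"
    and "admissable \<alpha> c \<theta>"
    and "sets \<phi> = sets borel"
    and "emeasure \<phi> {..0} = 0"
    and "\<forall>t>0. emeasure \<phi> {t<..} = ennreal (t powr (-\<alpha>) * \<theta> (ln t))"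
    and "\<psi> = (\<lambda>x. \<integral>t. (1 - exp (- x * t)) \<partial>\<phi>)"
    and "G = (\<lambda>x. 1 / \<psi> x)"
    and "GI = (\<lambda>x. \<integral>y\<in>{0<..x}. G y \<partial>lborel)"
    and "d = c powr ((1 - \<alpha>) / \<alpha>)"
  shows "bernstein GI \<and> 0 < 1 - \<alpha> \<and> 1 - \<alpha> < 1 \<and> d > 1 \<and>
         (\<forall>x>0. GI (d powr (1 / (1 - \<alpha>)) * x) = d * GI x)"
proof -
  interpret M: admissible_measure \<alpha> c \<theta> \<phi>
    using assms(1-7) by unfold_locales
  have GI_eq: "GI = M.GI"
    using assms(8-10) by (simp add: fun_eq_iff M.GI_def M.G_def M.\<psi>_def)
  have "d = c powr (1 / \<alpha> - 1)"
    using assms(1,11) by (simp add: diff_divide_distrib)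
  then have d_eq: "d = M.\<rho> / c"
    using assms(3) by (simp add: M.\<rho>_def powr_diff)
  have "d powr (1 / (1 - \<alpha>)) = M.\<rho>"
    using assms(1,2,11) by (simp add: M.\<rho>_def powr_powr)
  moreover have "d > 1"
    using assms(1-3,11) by simp
  ultimately show ?thesis
    using assms(1,2) M.bernstein_GI M.GI_scale by (simp add: GI_eq d_eq)
qed

end
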